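(* Every weak factorization structure is a factorization structure.
   Context: Let $\mathbb{F}=\mathbb{R}$ or $\mathbb{C}$, $V_1,\ldots,V_m$ ($m\ge2$) 2-dimensional $\mathbb{F}$-vector spaces, $V^*=V_1^*\otimes\cdots\otimes V_m^*$. For $\ell\in\mathbb{P}(V_j)$ (the set of 1-dimensional subspaces, with Zariski topology) let $\Sigma^0_{j,\ell}=V_1^*\otimes\cdots\otimes V_{j-1}^*\otimes\ell^0\otimes V_{j+1}^*\otimes\cdots\otimes V_m^*$, where $\ell^0\subset V_j^*$ is the annihilator of $\ell$. "Generic $\ell$" means all $\ell$ in some nonempty Zariski-open subset. A weak factorization structure of dimension $m$ is an injective linear map $\varphi:\mathfrak{h}\to V^*$ with $\dim\mathfrak{h}=m+1$ such that $\dim(\varphi(\mathfrak{h})\cap\Sigma^0_{j,\ell})\ge1$ for every $j$ and generic $\ell\in\mathbb{P}(V_j)$. A factorization structure is such a map with $\dim(\varphi(\mathfrak{h})\cap\Sigma^0_{j,\ell})=1$ for every $j$ and generic $\ell\in\mathbb{P}(V_j)$. *)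

theory Defs
  imports "HOL-Analysis.Analysis" "HOL-Library.Function_Algebras"
begin

(* Conventions:
   - The ground field F is a type 'a :: real_normed_field (i.e. R or C).
   - V_j = F^2 represented as 'a \<times> 'a; V_j^* = F^2 as well, with pairing
     <(a,b),(x,y)> = a*x + b*y.
   - V^* = V_1^* \<otimes> ... \<otimes> V_m^* is modelled as functions T :: (nat \<Rightarrow> nat) \<Rightarrow> 'a
     on multi-indices f with f i \<in> {0,1} for i < m and f i = 0 for i \<ge> m,
     vanishing outside these multi-indices. Slots are indexed 0..m-1.
   - h = F^(m+1), modelled as functions nat \<Rightarrow> 'a vanishing at indices \<ge> m+1. *)

definition idx :: "nat \<Rightarrow> (nat \<Rightarrow> nat) set" where
  "idx m = {f. (\<forall>i<m. f i < 2) \<and> (\<forall>i\<ge>m. f i = 0)}"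

definition tensors :: "nat \<Rightarrow> ((nat \<Rightarrow> nat) \<Rightarrow> 'a::field) set" where
  "tensors m = {T. \<forall>f. f \<notin> idx m \<longrightarrow> T f = 0}"

definition tscale :: "'a::field \<Rightarrow> ('b \<Rightarrow> 'a) \<Rightarrow> ('b \<Rightarrow> 'a)" where
  "tscale c T = (\<lambda>f. c * T f)"

definition comp2 :: "'a \<times> 'a \<Rightarrow> nat \<Rightarrow> 'a" where
  "comp2 p k = (if k = 0 then fst p else snd p)"

definition pure :: "nat \<Rightarrow> (nat \<Rightarrow> 'a \<times> 'a) \<Rightarrow> (nat \<Rightarrow> nat) \<Rightarrow> 'a::field" where
  "pure m \<alpha> = (\<lambda>f. if f \<in> idx m then (\<Prod>i<m. comp2 (\<alpha> i) (f i)) else 0)"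

definition P1 :: "('a::field \<times> 'a) set set" where
  "P1 = {L. \<exists>v. v \<noteq> (0, 0) \<and> L = {(c * fst v, c * snd v) | c. True}}"

definition hom_eval :: "'a::field list \<Rightarrow> 'a \<times> 'a \<Rightarrow> 'a" where
  "hom_eval cs v = (\<Sum>k<length cs. cs ! k * fst v ^ k * snd v ^ (length cs - 1 - k))"

definition zariski_closed_P1 :: "('a::field \<times> 'a) set set \<Rightarrow> bool" where
  "zariski_closed_P1 Z \<longleftrightarrow> Z \<subseteq> P1 \<and>
     (\<exists>S. Z = {L \<in> P1. \<forall>cs\<in>S. \<forall>v\<in>L. hom_eval cs v = 0})"

definition generic :: "(('a::field \<times> 'a) set \<Rightarrow> bool) \<Rightarrow> bool" where
  "generic P \<longleftrightarrow> (\<exists>U. U \<subseteq> P1 \<and> U \<noteq> {} \<and> zariski_closed_P1 (P1 - U) \<and> (\<forall>L\<in>U. P L))"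

definition annih :: "('a::field \<times> 'a) set \<Rightarrow> ('a \<times> 'a) set" where
  "annih L = {\<alpha>. \<forall>v\<in>L. fst \<alpha> * fst v + snd \<alpha> * snd v = 0}"

text \<open>Sigma^0_{j,L} = V_1^* \<otimes> ... \<otimes> L^0 \<otimes> ... \<otimes> V_m^* (L^0 in slot j), as the span
  of pure tensors whose j-th factor lies in L^0.\<close>
definition Sigma0 :: "nat \<Rightarrow> nat \<Rightarrow> ('a::field \<times> 'a) set \<Rightarrow> ((nat \<Rightarrow> nat) \<Rightarrow> 'a) set" where
  "Sigma0 m j L = module.span tscale {pure m \<alpha> | \<alpha>. \<alpha> j \<in> annih L}"

definition hspace :: "nat \<Rightarrow> (nat \<Rightarrow> 'a::field) set" where
  "hspace m = {x. \<forall>i\<ge>m + 1. x i = 0}"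

definition inj_lin_map :: "nat \<Rightarrow> ((nat \<Rightarrow> 'a::field) \<Rightarrow> (nat \<Rightarrow> nat) \<Rightarrow> 'a) \<Rightarrow> bool" where
  "inj_lin_map m \<phi> \<longleftrightarrow>
     (\<forall>x\<in>hspace m. \<phi> x \<in> tensors m) \<and>
     (\<forall>x\<in>hspace m. \<forall>y\<in>hspace m. \<phi> (x + y) = \<phi> x + \<phi> y) \<and>
     (\<forall>c. \<forall>x\<in>hspace m. \<phi> (tscale c x) = tscale c (\<phi> x)) \<and>
     inj_on \<phi> (hspace m)"

definition weak_factorization_structure ::
  "nat \<Rightarrow> ((nat \<Rightarrow> 'a::field) \<Rightarrow> (nat \<Rightarrow> nat) \<Rightarrow> 'a) \<Rightarrow> bool" where
  "weak_factorization_structure m \<phi> \<longleftrightarrow> inj_lin_map m \<phi> \<and>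
     (\<forall>j<m. generic (\<lambda>L. vector_space.dim tscale (\<phi> ` hspace m \<inter> Sigma0 m j L) \<ge> 1))"

definition factorization_structure ::
  "nat \<Rightarrow> ((nat \<Rightarrow> 'a::field) \<Rightarrow> (nat \<Rightarrow> nat) \<Rightarrow> 'a) \<Rightarrow> bool" where
  "factorization_structure m \<phi> \<longleftrightarrow> inj_lin_map m \<phi> \<and>
     (\<forall>j<m. generic (\<lambda>L. vector_space.dim tscale (\<phi> ` hspace m \<inter> Sigma0 m j L) = 1))"

end

theory Submission
  imports Defs "HOL-Computational_Algebra.Polynomial"
begin

(*
  Let H = \<phi>(h), an (m+1)-dimensional space of tensors, and contract tensors in slot j with a
  vector v of V_j; for v \<in> \<ell>, \<Sigma>\<^sup>0_{j,\<ell>} lies in the kernel of this contraction, and a nonzero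
  tensor is killed by at most one direction in each slot. Proper Zariski-closed subsets of P(V_j)
  are finite, so the weak hypothesis gives, in every slot, arbitrarily many pairwise noncollinear
  directions whose contraction kills a nonzero element of H. Suppose that in slot j infinitely many
  directions had a two-dimensional kernel on H. A pigeonhole argument selects one of them, v, such
  that the contraction of H by v still has many such directions in all other slots; induction on
  the number of slots then yields m independent tensors in the contraction of H, and together with
  the two-dimensional kernel these lift to m + 2 independent elements of H, which is impossible.
*)

section \<open>Contraction of tensors\<close>

interpretation tensor: vector_space "tscale :: 'a::field \<Rightarrow> ('b \<Rightarrow> 'a) \<Rightarrow> ('b \<Rightarrow> 'a)"
  by unfold_locales (auto simp: tscale_def fun_eq_iff algebra_simps)

definition multi_indices :: "nat set \<Rightarrow> (nat \<Rightarrow> nat) set" where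
  "multi_indices S = {f. (\<forall>i\<in>S. f i < 2) \<and> (\<forall>i. i \<notin> S \<longrightarrow> f i = 0)}"

definition tensors_on :: "nat set \<Rightarrow> ((nat \<Rightarrow> nat) \<Rightarrow> 'a::field) set" where
  "tensors_on S = {T. \<forall>f. f \<notin> multi_indices S \<longrightarrow> T f = 0}"

(* Pairs slot j with v \<in> V_j; the result does not depend on slot j and lives at index 0 there. *)
definition contract :: "nat \<Rightarrow> 'a::field \<times> 'a \<Rightarrow> ((nat \<Rightarrow> nat) \<Rightarrow> 'a) \<Rightarrow> (nat \<Rightarrow> nat) \<Rightarrow> 'a" where
  "contract j v T = (\<lambda>f. if f j = 0 then fst v * T (f(j := 0)) + snd v * T (f(j := 1)) else 0)"

definition noncollinear :: "'a::field \<times> 'a \<Rightarrow> 'a \<times> 'a \<Rightarrow> bool" where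
  "noncollinear v w \<longleftrightarrow> fst v * snd w \<noteq> snd v * fst w"

definition dim_kernel_ge :: "((nat \<Rightarrow> nat) \<Rightarrow> 'a::field) set \<Rightarrow> nat \<Rightarrow> 'a \<times> 'a \<Rightarrow> nat \<Rightarrow> bool" where
  "dim_kernel_ge H j v d \<longleftrightarrow>
     (\<exists>K\<subseteq>H. tensor.independent K \<and> card K = d \<and> (\<forall>T\<in>K. contract j v T = 0))"

definition many_noncollinear :: "nat \<Rightarrow> ('a::field \<times> 'a \<Rightarrow> bool) \<Rightarrow> bool" where
  "many_noncollinear N P \<longleftrightarrow> (\<exists>A. pairwise noncollinear A \<and> card A = N \<and> (\<forall>v\<in>A. P v))"

lemma linear_contract: "Vector_Spaces.linear tscale tscale (contract j v)"
  by (auto simp: Vector_Spaces.linear_iff tensor.vector_space_axioms contract_def tscale_def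
      fun_eq_iff algebra_simps)

lemma contract_zero [simp]: "contract j v 0 = 0"
  by (simp add: contract_def fun_eq_iff)

lemma contract_commute:
  assumes "i \<noteq> j"
  shows "contract i s (contract j v T) = contract j v (contract i s T)"
proof
  fix f :: "nat \<Rightarrow> nat"
  have "f(j := a, i := b) = f(i := b, j := a)" for a b
    using assms by (simp add: fun_upd_twist)
  then show "contract i s (contract j v T) f = contract j v (contract i s T) f"
    using assms by (simp add: contract_def algebra_simps)
qed

lemma contract_tensors_on:
  assumes "T \<in> tensors_on S"
  shows "contract j v T \<in> tensors_on (S - {j})"
proof -
  have "T (f(j := k)) = 0" if "f \<notin> multi_indices (S - {j})" "f j = 0" "k < 2" for f k
  proof -
    have "f(j := k) \<notin> multi_indices S"
      using that by (auto simp: multi_indices_def split: if_splits)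
    then show ?thesis
      using assms by (simp add: tensors_on_def)
  qed
  then show ?thesis
    by (simp add: tensors_on_def contract_def)
qed

lemma eq_0_if_contract_noncollinear:
  assumes T: "T \<in> tensors_on S" and "j \<in> S" and vw: "noncollinear v w"
    and "contract j v T = 0" and "contract j w T = 0"
  shows "T = 0"
proof
  fix f
  show "T f = 0 f"
  proof (cases "f \<in> multi_indices S")
    case False
    then show ?thesis using T by (simp add: tensors_on_def)
  next
    case True
    let ?x = "T (f(j := 0))" and ?y = "T (f(j := 1))"
    have eqs: "fst v * ?x + snd v * ?y = 0" "fst w * ?x + snd w * ?y = 0"
      using fun_cong[OF \<open>contract j v T = 0\<close>, of "f(j := 0)"]
        fun_cong[OF \<open>contract j w T = 0\<close>, of "f(j := 0)"]
      by (simp_all add: contract_def)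
    have "?x * (fst v * snd w - snd v * fst w) =
        snd w * (fst v * ?x + snd v * ?y) - snd v * (fst w * ?x + snd w * ?y)"
      "?y * (fst v * snd w - snd v * fst w) =
        fst v * (fst w * ?x + snd w * ?y) - fst w * (fst v * ?x + snd v * ?y)"
      by (simp_all add: algebra_simps)
    then have "?x * (fst v * snd w - snd v * fst w) = 0" "?y * (fst v * snd w - snd v * fst w) = 0"
      by (simp_all only: eqs) simp_all
    then have "?x = 0" "?y = 0"
      using vw by (simp_all add: noncollinear_def)
    moreover have "f = f(j := 0) \<or> f = f(j := 1)"
      using True \<open>j \<in> S\<close> by (auto simp: multi_indices_def less_2_cases_iff fun_upd_idem)
    ultimately show ?thesis
      by (metis zero_fun_def)
  qed
qed

lemma many_noncollinear_mono:
  assumes "many_noncollinear M P" "N \<le> M"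
  shows "many_noncollinear N P"
proof -
  obtain A where A: "pairwise noncollinear A" "card A = M" "\<forall>v\<in>A. P v"
    using assms(1) by (auto simp: many_noncollinear_def)
  obtain A' where "A' \<subseteq> A" "card A' = N"
    using assms(2) A(2) by (metis obtain_subset_with_card_n)
  then show ?thesis
    using A by (auto simp: many_noncollinear_def intro: pairwise_subset)
qed

lemma many_noncollinear_discard:
  assumes "pairwise noncollinear A" "card A = N + k" "finite A" "card {s \<in> A. Q s} \<le> k"
    and "\<And>s. s \<in> A \<Longrightarrow> \<not> Q s \<Longrightarrow> P s"
  shows "many_noncollinear N P"
proof -
  have "card A = card {s \<in> A. \<not> Q s} + card {s \<in> A. Q s}"
    using assms(3) by (subst card_Un_disjoint[symmetric]) (auto intro: arg_cong[where f = card])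
  then have "N \<le> card {s \<in> A. \<not> Q s}"
    using assms(2,4) by linarith
  moreover have "many_noncollinear (card {s \<in> A. \<not> Q s}) P"
    unfolding many_noncollinear_def using assms(1,5)
    by (intro exI[of _ "{s \<in> A. \<not> Q s}"]) (auto intro: pairwise_subset)
  ultimately show ?thesis
    using many_noncollinear_mono by blast
qed

lemma dim_kernel_ge_1_iff: "dim_kernel_ge H j v 1 \<longleftrightarrow> (\<exists>T\<in>H. T \<noteq> 0 \<and> contract j v T = 0)"
proof
  assume "dim_kernel_ge H j v 1"
  then show "\<exists>T\<in>H. T \<noteq> 0 \<and> contract j v T = 0"
    by (auto simp: dim_kernel_ge_def card_1_singleton_iff tensor.dependent_single)
next
  assume "\<exists>T\<in>H. T \<noteq> 0 \<and> contract j v T = 0"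
  then obtain T where "T \<in> H" "T \<noteq> 0" "contract j v T = 0"
    by blast
  then show "dim_kernel_ge H j v 1"
    unfolding dim_kernel_ge_def by (intro exI[of _ "{T}"]) (simp add: tensor.dependent_single)
qed

lemma independent_extend_by_kernel:
  fixes f :: "('b \<Rightarrow> 'a::field) \<Rightarrow> 'b \<Rightarrow> 'a"
  assumes f: "Vector_Spaces.linear tscale tscale f"
    and B: "B \<subseteq> f ` H" "tensor.independent B" "finite B"
    and K: "K \<subseteq> H" "tensor.independent K" "finite K" "\<forall>x\<in>K. f x = 0"
  shows "\<exists>A\<subseteq>H. tensor.independent A \<and> card A = card B + card K"
proof -
  interpret f: Vector_Spaces.linear tscale tscale f by (rule f)
  obtain g where g: "\<And>b. b \<in> B \<Longrightarrow> g b \<in> H \<and> f (g b) = b"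
    using B(1) by (metis f_inv_into_f inv_into_into subsetD)
  have inj: "inj_on g B"
    by (metis g inj_onI)
  have disj: "g ` B \<inter> K = {}"
    using g K(4) B(2) tensor.dependent_zero by fastforce
  have scale_0: "tscale 0 x = 0" for x :: "'b \<Rightarrow> 'a"
    by (simp add: tscale_def fun_eq_iff)
  have "tensor.independent (g ` B \<union> K)"
  proof (rule tensor.independent_if_scalars_zero)
    show "finite (g ` B \<union> K)"
      using B(3) K(3) by simp
    fix c x
    assume sum_0: "(\<Sum>y\<in>g ` B \<union> K. tscale (c y) y) = 0" and x: "x \<in> g ` B \<union> K"
    have split: "(\<Sum>y\<in>g ` B \<union> K. h y) = (\<Sum>b\<in>B. h (g b)) + (\<Sum>y\<in>K. h y)" for h
      using B(3) K(3) disj by (simp add: sum.union_disjoint sum.reindex inj)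
    have "(\<Sum>y\<in>K. tscale (c y) (f y)) = 0"
      using K(4) by (simp add: scale_0)
    then have "(\<Sum>b\<in>B. tscale (c (g b)) b) = f (\<Sum>y\<in>g ` B \<union> K. tscale (c y) y)"
      by (simp add: split f.add f.sum f.scale g)
    then have "\<forall>b\<in>B. c (g b) = 0"
      using sum_0 tensor.independentD[OF B(2,3) subset_refl, of "\<lambda>b. c (g b)"] by simp
    then have "(\<Sum>y\<in>K. tscale (c y) y) = 0"
      using sum_0 by (simp add: split scale_0)
    then have "\<forall>y\<in>K. c y = 0"
      using tensor.independentD[OF K(2,3) subset_refl, of c] by simp
    with \<open>\<forall>b\<in>B. c (g b) = 0\<close> show "c x = 0"
      using x by blast
  qed
  moreover have "card (g ` B \<union> K) = card B + card K"
    using B(3) K(3) disj by (simp add: card_Un_disjoint card_image inj)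
  ultimately show ?thesis
    using g K(1) by (intro exI[of _ "g ` B \<union> K"]) auto
qed

lemma exists_card_hits_le:
  assumes "finite P" "finite C" "C \<noteq> {}" "card P \<le> k * card C"
    and unique: "\<And>p v w. p \<in> P \<Longrightarrow> v \<in> C \<Longrightarrow> w \<in> C \<Longrightarrow> hit p v \<Longrightarrow> hit p w \<Longrightarrow> v = w"
  shows "\<exists>v\<in>C. card {p\<in>P. hit p v} \<le> k"
proof (rule ccontr)
  assume "\<not> ?thesis"
  then have "card C * Suc k \<le> (\<Sum>v\<in>C. card {p\<in>P. hit p v})"
    using sum_bounded_below[of C "Suc k"] by (simp add: not_le Suc_le_eq)
  also have "\<dots> = card (\<Union>v\<in>C. {p\<in>P. hit p v})"
    using assms(1,2) unique by (intro card_UN_disjoint[symmetric]) auto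
  also have "\<dots> \<le> card P"
    using assms(1) by (intro card_mono) auto
  finally have "card C * Suc k \<le> k * card C"
    using assms(4) by linarith
  then show False
    using assms(2,3) by (simp add: card_gt_0_iff mult.commute)
qed

lemma independent_extend_by_contract_kernel:
  assumes "B \<subseteq> contract j v ` H" "tensor.independent B" "finite B"
    and "dim_kernel_ge H j v d" "0 < d"
  shows "\<exists>A\<subseteq>H. tensor.independent A \<and> card A = card B + d"
proof -
  obtain K where K: "K \<subseteq> H" "tensor.independent K" "card K = d" "\<forall>T\<in>K. contract j v T = 0"
    using assms(4) unfolding dim_kernel_ge_def by blast
  moreover have "finite K"
    using K(3) \<open>0 < d\<close> by (simp add: card_ge_0_finite)
  ultimately show ?thesis
    using independent_extend_by_kernel[OF linear_contract assms(1-3) K(1,2) _ K(4)] by simp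
qed

lemma independent_from_two_kernel_directions:
  assumes "H \<subseteq> tensors_on S" "j \<in> S" "noncollinear v w"
    and "dim_kernel_ge H j v d" "dim_kernel_ge H j w d" "0 < d"
  shows "\<exists>B\<subseteq>H. tensor.independent B \<and> card B = 1 + d"
proof -
  obtain T where T: "T \<in> H" "T \<noteq> 0" "contract j w T = 0"
    using assms(5,6) unfolding dim_kernel_ge_def
    by (metis card_gt_0_iff ex_in_conv subsetD tensor.dependent_zero)
  have "contract j v T \<noteq> 0"
    using eq_0_if_contract_noncollinear[OF _ assms(2,3)] T assms(1) by blast
  then have "tensor.independent {contract j v T}"
    by (simp add: tensor.dependent_single)
  moreover have "{contract j v T} \<subseteq> contract j v ` H"
    using imageI[OF T(1)] by simp
  ultimately have "\<exists>B\<subseteq>H. tensor.independent B \<and> card B = card {contract j v T} + d"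
    by (intro independent_extend_by_contract_kernel[OF _ _ _ assms(4,6)]) simp_all
  then show ?thesis
    by simp
qed

lemma exists_direction_killing_few:
  fixes T :: "'p \<Rightarrow> (nat \<Rightarrow> nat) \<Rightarrow> 'a::field"
  assumes "finite P" "\<forall>p\<in>P. T p \<in> tensors_on S \<and> T p \<noteq> 0" "j \<in> S"
    and "pairwise noncollinear C" "finite C" "C \<noteq> {}" "card P \<le> k * card C"
  shows "\<exists>v\<in>C. card {p \<in> P. contract j v (T p) = 0} \<le> k"
  using assms(1,5-7)
proof (rule exists_card_hits_le)
  fix p v w assume "p \<in> P" "v \<in> C" "w \<in> C" "contract j v (T p) = 0" "contract j w (T p) = 0"
  show "v = w"
  proof (rule ccontr)
    assume "v \<noteq> w"
    then have "noncollinear v w"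
      using assms(4) \<open>v \<in> C\<close> \<open>w \<in> C\<close> by (simp add: pairwise_def)
    then show False
      using eq_0_if_contract_noncollinear[OF _ assms(3)] assms(2) \<open>p \<in> P\<close>
        \<open>contract j v (T p) = 0\<close> \<open>contract j w (T p) = 0\<close> by blast
  qed
qed

(* Each witness tensor of a direction in another slot is killed by at most one of the pairwise
   noncollinear candidates v, so some candidate spoils at most card R of the card R * (N + card R)
   witnesses. *)
lemma exists_contraction_keeping_directions:
  fixes H :: "((nat \<Rightarrow> nat) \<Rightarrow> 'a::field) set"
  assumes R: "finite R" "j \<notin> R" and H: "H \<subseteq> tensors_on (insert j R)" and "0 < N"
    and slots: "\<forall>i\<in>R. many_noncollinear (N + card R) (\<lambda>s. dim_kernel_ge H i s 1)"
    and "many_noncollinear (N + card R) P"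
  shows "\<exists>v. P v \<and> (\<forall>i\<in>R. many_noncollinear N (\<lambda>s. dim_kernel_ge (contract j v ` H) i s 1))"
proof -
  let ?k = "card R"
  obtain A where A: "\<And>i. i \<in> R \<Longrightarrow>
      pairwise noncollinear (A i) \<and> card (A i) = N + ?k \<and> (\<forall>s\<in>A i. dim_kernel_ge H i s 1)"
    using slots unfolding many_noncollinear_def by metis
  obtain C where C: "pairwise noncollinear C" "card C = N + ?k" "\<forall>v\<in>C. P v"
    using assms(6) unfolding many_noncollinear_def by blast
  have "\<forall>p\<in>Sigma R A. \<exists>T. T \<in> H \<and> T \<noteq> 0 \<and> contract (fst p) (snd p) T = 0"
    using A unfolding dim_kernel_ge_1_iff by auto
  from bchoice[OF this] obtain T where T_Sigma: "\<forall>p\<in>Sigma R A. T p \<in> H \<and> T p \<noteq> 0 \<and> contract (fst p) (snd p) (T p) = 0"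
    by blast
  then have T: "T (i, s) \<in> H \<and> T (i, s) \<noteq> 0 \<and> contract i s (T (i, s)) = 0" if "i \<in> R" "s \<in> A i" for i s
    using that by auto
  have fin_A: "finite (A i)" if "i \<in> R" for i
    using A[OF that] \<open>0 < N\<close> by (simp add: card_ge_0_finite)
  have "\<exists>v\<in>C. card {p \<in> Sigma R A. contract j v (T p) = 0} \<le> ?k"
  proof (rule exists_direction_killing_few)
    show "finite (Sigma R A)" "card (Sigma R A) \<le> ?k * card C"
      using R(1) fin_A A C(2) by (auto simp: card_SigmaI)
    show "\<forall>p\<in>Sigma R A. T p \<in> tensors_on (insert j R) \<and> T p \<noteq> 0"
      using T_Sigma H by blast
    show "finite C" "C \<noteq> {}"
      using C(2) \<open>0 < N\<close> by (auto simp: card_ge_0_finite)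
  qed (use C(1) in simp_all)
  then obtain v where v: "v \<in> C" "card {p \<in> Sigma R A. contract j v (T p) = 0} \<le> ?k"
    by blast
  have "many_noncollinear N (\<lambda>s. dim_kernel_ge (contract j v ` H) i s 1)" if i: "i \<in> R" for i
  proof (rule many_noncollinear_discard)
    show "pairwise noncollinear (A i)" "card (A i) = N + ?k" "finite (A i)"
      using A[OF i] fin_A[OF i] by auto
    have "card {s \<in> A i. contract j v (T (i, s)) = 0}
        = card (Pair i ` {s \<in> A i. contract j v (T (i, s)) = 0})"
      by (simp add: card_image inj_on_def)
    also have "\<dots> \<le> card {p \<in> Sigma R A. contract j v (T p) = 0}"
      using i R(1) fin_A by (intro card_mono) auto
    finally show "card {s \<in> A i. contract j v (T (i, s)) = 0} \<le> ?k"
      using v(2) by linarith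
    fix s assume s: "s \<in> A i" "contract j v (T (i, s)) \<noteq> 0"
    have "i \<noteq> j"
      using i R(2) by blast
    then have "contract i s (contract j v (T (i, s))) = 0"
      using T[OF i s(1)] contract_commute[OF \<open>i \<noteq> j\<close>, of s v "T (i, s)"] by simp
    then show "dim_kernel_ge (contract j v ` H) i s 1"
      using T[OF i s(1)] s(2) unfolding dim_kernel_ge_1_iff by blast
  qed
  then show ?thesis
    using v(1) C(3) by blast
qed

(* Induction on the slots other than j; the bound (card R + 1)^2 + 1 leaves room for the card R
   directions per slot that each contraction step may discard. *)
lemma independent_from_kernel_directions:
  fixes H :: "((nat \<Rightarrow> nat) \<Rightarrow> 'a::field) set"
  assumes "finite R" "j \<notin> R" "H \<subseteq> tensors_on (insert j R)" "0 < d"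
    and "\<forall>i\<in>R. many_noncollinear ((card R + 1)\<^sup>2 + 1) (\<lambda>v. dim_kernel_ge H i v 1)"
    and "many_noncollinear ((card R + 1)\<^sup>2 + 1) (\<lambda>v. dim_kernel_ge H j v d)"
  shows "\<exists>B\<subseteq>H. tensor.independent B \<and> card B = card R + 1 + d"
  using assms
proof (induction R arbitrary: j H d rule: finite_induct)
  case empty
  then obtain A where A: "pairwise noncollinear A" "card A = 2" "\<forall>v\<in>A. dim_kernel_ge H j v d"
    by (auto simp: many_noncollinear_def)
  then obtain v w where "noncollinear v w" "dim_kernel_ge H j v d" "dim_kernel_ge H j w d"
    by (auto simp: card_2_iff pairwise_insert)
  then show ?case
    using independent_from_two_kernel_directions[of H "{j}" j v w d] empty.prems(2,3) by simp
next
  case (insert i F)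
  let ?R = "insert i F" and ?N = "(card F + 1)\<^sup>2 + 1"
  have card_R: "card ?R = card F + 1"
    using insert.hyps by simp
  have N_le: "?N + card ?R \<le> (card ?R + 1)\<^sup>2 + 1"
    unfolding card_R by (simp add: power2_eq_square)
  have "\<forall>k\<in>?R. many_noncollinear (?N + card ?R) (\<lambda>s. dim_kernel_ge H k s 1)"
    using insert.prems(4) many_noncollinear_mono[OF _ N_le] by blast
  moreover have "many_noncollinear (?N + card ?R) (\<lambda>v. dim_kernel_ge H j v d)"
    using insert.prems(5) N_le by (rule many_noncollinear_mono)
  ultimately have "\<exists>v. dim_kernel_ge H j v d \<and>
      (\<forall>k\<in>?R. many_noncollinear ?N (\<lambda>s. dim_kernel_ge (contract j v ` H) k s 1))"
    using insert.hyps(1) insert.prems(1,2) by (intro exists_contraction_keeping_directions) simp_all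
  then obtain v where v: "dim_kernel_ge H j v d"
    and dirs: "\<forall>k\<in>?R. many_noncollinear ?N (\<lambda>s. dim_kernel_ge (contract j v ` H) k s 1)"
    by blast
  have "insert j ?R - {j} = ?R"
    using insert.prems(1) by blast
  then have "contract j v T \<in> tensors_on ?R" if "T \<in> H" for T
    using contract_tensors_on[of T "insert j ?R" j v] insert.prems(2) that by auto
  then have "contract j v ` H \<subseteq> tensors_on ?R"
    by blast
  then obtain B where B: "B \<subseteq> contract j v ` H" "tensor.independent B" "card B = card ?R + 1"
    using insert.IH[of i "contract j v ` H" 1] insert.hyps(2) dirs card_R by auto
  then have "finite B"
    by (simp add: card_ge_0_finite)
  then show ?case
    using independent_extend_by_contract_kernel[OF B(1,2) _ v insert.prems(3)] B(3) by simp
qed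

section \<open>The projective line\<close>

definition line :: "'a::field \<times> 'a \<Rightarrow> ('a \<times> 'a) set" where
  "line v = {(c * fst v, c * snd v) | c. True}"

lemma P1_eq_lines: "P1 = {line v | v. v \<noteq> (0, 0)}"
  unfolding P1_def line_def by blast

lemma mem_line_iff: "w \<in> line v \<longleftrightarrow> (\<exists>c. w = (c * fst v, c * snd v))"
  unfolding line_def by blast

lemma mem_line_self: "v \<in> line v"
  unfolding mem_line_iff by (intro exI[of _ 1]) simp

lemma line_subset_line:
  assumes "w \<in> line v"
  shows "line w \<subseteq> line v"
proof
  fix x assume "x \<in> line w"
  then obtain c d where "x = (c * fst w, c * snd w)" "w = (d * fst v, d * snd v)"
    using assms unfolding mem_line_iff by blast
  then have "x = ((c * d) * fst v, (c * d) * snd v)"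
    by (simp add: mult.assoc)
  then show "x \<in> line v"
    unfolding mem_line_iff by blast
qed

lemma mem_line_iff_collinear:
  assumes "v \<noteq> (0, 0)"
  shows "w \<in> line v \<longleftrightarrow> \<not> noncollinear v w"
proof
  assume "w \<in> line v"
  then show "\<not> noncollinear v w"
    by (auto simp: mem_line_iff noncollinear_def)
next
  assume collinear: "\<not> noncollinear v w"
  show "w \<in> line v"
  proof (cases "fst v = 0")
    case True
    then have "snd v \<noteq> 0" "fst w = 0"
      using assms collinear by (auto simp: noncollinear_def prod_eq_iff)
    then have "w = (snd w / snd v * fst v, snd w / snd v * snd v)"
      using True by (simp add: prod_eq_iff)
    then show ?thesis
      unfolding mem_line_iff by blast
  next
    case False
    then have "w = (fst w / fst v * fst v, fst w / fst v * snd v)"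
      using collinear by (simp add: noncollinear_def prod_eq_iff field_simps)
    then show ?thesis
      unfolding mem_line_iff by blast
  qed
qed

lemma line_eq_iff_collinear:
  assumes "v \<noteq> (0, 0)" "w \<noteq> (0, 0)"
  shows "line v = line w \<longleftrightarrow> \<not> noncollinear v w"
proof
  assume "line v = line w"
  then show "\<not> noncollinear v w"
    using mem_line_iff_collinear[OF assms(1)] mem_line_self by blast
next
  assume "\<not> noncollinear v w"
  then have "\<not> noncollinear w v"
    by (simp add: noncollinear_def mult.commute)
  then show "line v = line w"
    using \<open>\<not> noncollinear v w\<close> mem_line_iff_collinear assms line_subset_line by blast
qed

lemma P1_cases:
  assumes "L \<in> P1"
  obtains "L = line (1, 0)" | t where "L = line (t, 1)"
proof -
  obtain v where v: "v \<noteq> (0, 0)" "L = line v"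
    using assms unfolding P1_eq_lines by blast
  show thesis
  proof (cases "snd v = 0")
    case True
    then have "L = line (1, 0)"
      using v line_eq_iff_collinear[OF v(1), of "(1, 0)"] by (simp add: noncollinear_def)
    then show thesis by (rule that(1))
  next
    case False
    then have "L = line (fst v / snd v, 1)"
      using v line_eq_iff_collinear[OF v(1), of "(fst v / snd v, 1)"] by (simp add: noncollinear_def)
    then show thesis by (rule that(2))
  qed
qed

lemma line_in_P1: "v \<noteq> (0, 0) \<Longrightarrow> line v \<in> P1"
  unfolding P1_eq_lines by blast

lemma line_t1_eq_iff: "line (t, 1) = line (s, 1) \<longleftrightarrow> t = s"
  by (subst line_eq_iff_collinear) (auto simp: noncollinear_def)

lemma infinite_P1: "infinite (P1 :: ('a::{field, semiring_char_0} \<times> 'a) set set)"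
proof
  assume "finite (P1 :: ('a \<times> 'a) set set)"
  moreover have "range (\<lambda>t::'a. line (t, 1)) \<subseteq> P1"
    by (auto intro: line_in_P1)
  ultimately have "finite (range (\<lambda>t::'a. line (t, 1)))"
    by (rule finite_subset[rotated])
  moreover have "inj (\<lambda>t::'a. line (t, 1))"
    by (simp add: inj_on_def line_t1_eq_iff)
  ultimately show False
    using finite_imageD infinite_UNIV_char_0 by blast
qed

lemma hom_eval_scale: "hom_eval cs (c * x, c * y) = c ^ (length cs - 1) * hom_eval cs (x, y)"
proof -
  have "c ^ (length cs - 1) = c ^ k * c ^ (length cs - 1 - k)" if "k < length cs" for k
    using that by (simp flip: power_add)
  then show ?thesis
    unfolding hom_eval_def by (simp add: sum_distrib_left power_mult_distrib algebra_simps)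
qed

lemma hom_eval_line_eq_0_iff: "(\<forall>w\<in>line v. hom_eval cs w = 0) \<longleftrightarrow> hom_eval cs v = 0"
proof
  assume "hom_eval cs v = 0"
  show "\<forall>w\<in>line v. hom_eval cs w = 0"
  proof
    fix w assume "w \<in> line v"
    then obtain c where "w = (c * fst v, c * snd v)"
      unfolding mem_line_iff by blast
    then show "hom_eval cs w = 0"
      using \<open>hom_eval cs v = 0\<close> hom_eval_scale[of cs c "fst v" "snd v"] by simp
  qed
qed (use mem_line_self in blast)

lemma hom_eval_t1: "hom_eval cs (t, 1) = poly (\<Sum>k<length cs. monom (cs ! k) k) t"
  unfolding hom_eval_def by (simp add: poly_sum poly_monom)

lemma finite_zero_lines:
  assumes "hom_eval cs v \<noteq> 0"
  shows "finite {L \<in> P1. \<forall>w\<in>L. hom_eval cs w = 0}"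
proof -
  define p where "p = (\<Sum>k<length cs. monom (cs ! k) k)"
  have "p \<noteq> 0"
  proof
    assume "p = 0"
    have "cs ! k = coeff p k" if "k < length cs" for k
      using that by (simp add: p_def coeff_sum coeff_monom)
    then have "hom_eval cs v = 0"
      using \<open>p = 0\<close> by (simp add: hom_eval_def)
    with assms show False ..
  qed
  have "{L \<in> P1. \<forall>w\<in>L. hom_eval cs w = 0} \<subseteq>
      insert (line (1, 0)) ((\<lambda>t. line (t, 1)) ` {t. poly p t = 0})"
  proof clarify
    fix L assume "L \<in> P1" "\<forall>w\<in>L. hom_eval cs w = 0" "L \<notin> (\<lambda>t. line (t, 1)) ` {t. poly p t = 0}"
    then show "L = line (1, 0)"
      by (cases rule: P1_cases) (auto simp: hom_eval_line_eq_0_iff hom_eval_t1 p_def)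
  qed
  then show ?thesis
    using poly_roots_finite[OF \<open>p \<noteq> 0\<close>] by (auto intro: finite_subset)
qed

lemma zariski_closed_P1_finite:
  assumes "zariski_closed_P1 Z" "Z \<noteq> P1"
  shows "finite Z"
proof -
  obtain S where S: "Z = {L \<in> P1. \<forall>cs\<in>S. \<forall>v\<in>L. hom_eval cs v = 0}"
    using assms(1) unfolding zariski_closed_P1_def by blast
  then obtain cs v where "cs \<in> S" "hom_eval cs v \<noteq> 0"
    using assms(2) by blast
  then have "Z \<subseteq> {L \<in> P1. \<forall>w\<in>L. hom_eval cs w = 0}"
    using S by blast
  then show ?thesis
    using finite_zero_lines[OF \<open>hom_eval cs v \<noteq> 0\<close>] finite_subset by blast
qed

lemma hom_eval_map_coeff:
  fixes p :: "'a::field poly"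
  assumes "degree p \<le> n"
  shows "hom_eval (map (coeff p) [0..<Suc n]) (t, 1) = poly p t"
    and "hom_eval (map (coeff p) [0..<Suc n]) (1, 0) = coeff p n"
proof -
  have eval: "hom_eval (map (coeff p) [0..<Suc n]) (x, y) = (\<Sum>k\<le>n. coeff p k * x ^ k * y ^ (n - k))"
    for x y
    unfolding hom_eval_def lessThan_Suc_atMost[symmetric]
    by (intro sum.cong) (auto simp del: upt_Suc)
  have "(\<Sum>k\<le>n. coeff p k * t ^ k) = (\<Sum>k\<le>degree p. coeff p k * t ^ k)"
    using assms by (intro sum.mono_neutral_right) (auto simp: coeff_eq_0)
  then show "hom_eval (map (coeff p) [0..<Suc n]) (t, 1) = poly p t"
    by (simp add: eval poly_altdef del: upt_Suc)
  have "(\<Sum>k\<le>n. coeff p k * 0 ^ (n - k)) = (\<Sum>k\<le>n. if k = n then coeff p k else 0)"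
    by (intro sum.cong) (auto simp: power_0_left)
  then show "hom_eval (map (coeff p) [0..<Suc n]) (1, 0) = coeff p n"
    by (simp add: eval del: upt_Suc)
qed

(* F is the zero set of the binary form y^e * \<Prod>{x - t * y | line (t, 1) \<in> F},
   where e = 1 iff line (1, 0) \<in> F. *)
lemma finite_zariski_closed_P1:
  fixes F :: "('a::field \<times> 'a) set set"
  assumes "finite F" "F \<subseteq> P1"
  shows "zariski_closed_P1 F"
proof -
  define T where "T = (\<lambda>t. line (t, 1)) -` F"
  have "finite T"
    unfolding T_def using assms(1) by (rule finite_vimageI) (simp add: inj_on_def line_t1_eq_iff)
  define p :: "'a poly" where "p = (\<Prod>t\<in>T. [:- t, 1:])"
  define n where "n = degree p + (if line (1, 0) \<in> F then 1 else 0)"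
  define cs where "cs = map (coeff p) [0..<Suc n]"
  have deg: "degree p \<le> n"
    by (simp add: n_def)
  have in_F_t1: "line (t, 1) \<in> F \<longleftrightarrow> hom_eval cs (t, 1) = 0" for t
  proof -
    have "poly p t = (\<Prod>s\<in>T. t - s)"
      by (simp add: p_def poly_prod)
    then show ?thesis
      using \<open>finite T\<close> by (simp add: cs_def hom_eval_map_coeff[OF deg] T_def del: upt_Suc)
  qed
  have in_F_10: "line (1, 0) \<in> F \<longleftrightarrow> hom_eval cs (1, 0) = 0"
  proof -
    have "lead_coeff p = 1"
      by (simp add: p_def lead_coeff_prod)
    moreover have "hom_eval cs (1, 0) = coeff p n"
      by (simp add: cs_def hom_eval_map_coeff(2)[OF deg] del: upt_Suc)
    ultimately show ?thesis
      by (simp add: n_def coeff_eq_0)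
  qed
  have in_F_iff: "L \<in> F \<longleftrightarrow> (\<forall>v\<in>L. hom_eval cs v = 0)" if "L \<in> P1" for L
    using that
  proof (cases rule: P1_cases)
    case 1
    then show ?thesis
      by (simp only: in_F_10 hom_eval_line_eq_0_iff)
  next
    case (2 t)
    then show ?thesis
      by (simp only: in_F_t1 hom_eval_line_eq_0_iff)
  qed
  have F_eq: "F = {L \<in> P1. \<forall>c\<in>{cs}. \<forall>v\<in>L. hom_eval c v = 0}"
  proof (rule set_eqI)
    fix L
    show "L \<in> F \<longleftrightarrow> L \<in> {L \<in> P1. \<forall>c\<in>{cs}. \<forall>v\<in>L. hom_eval c v = 0}"
      using assms(2) in_F_iff[of L] by blast
  qed
  show ?thesis
    unfolding zariski_closed_P1_def by (intro conjI exI[of _ "{cs}"] assms(2) F_eq)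
qed

lemma generic_iff_finite:
  fixes P :: "('a::{field, semiring_char_0} \<times> 'a) set \<Rightarrow> bool"
  shows "generic P \<longleftrightarrow> finite {L \<in> P1. \<not> P L}"
proof
  assume "generic P"
  then obtain U where U: "U \<subseteq> P1" "U \<noteq> {}" "zariski_closed_P1 (P1 - U)" "\<forall>L\<in>U. P L"
    unfolding generic_def by blast
  moreover have "P1 - U \<noteq> P1"
    using U(1,2) by blast
  ultimately have "finite (P1 - U)"
    using zariski_closed_P1_finite by blast
  moreover have "{L \<in> P1. \<not> P L} \<subseteq> P1 - U"
    using U(4) by blast
  ultimately show "finite {L \<in> P1. \<not> P L}"
    by (rule finite_subset[rotated])
next
  assume fin: "finite {L \<in> P1. \<not> P L}"
  have "P1 - {L \<in> P1. P L} = {L \<in> P1. \<not> P L}"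
    by blast
  then have "zariski_closed_P1 (P1 - {L \<in> P1. P L})"
    using finite_zariski_closed_P1[OF fin] by simp
  moreover have "{L \<in> P1. P L} \<noteq> {}"
  proof
    assume "{L \<in> P1. P L} = {}"
    then have "{L \<in> P1. \<not> P L} = P1"
      by blast
    then have "finite (P1 :: ('a \<times> 'a) set set)"
      using fin by simp
    then show False
      using infinite_P1 by blast
  qed
  ultimately show "generic P"
    unfolding generic_def by (intro exI[of _ "{L \<in> P1. P L}"]) auto
qed

lemma many_noncollinear_if_infinite:
  assumes "W \<subseteq> P1" "infinite W" and P: "\<And>L v. L \<in> W \<Longrightarrow> v \<in> L \<Longrightarrow> P v"
  shows "many_noncollinear N P"
proof -
  obtain W0 where W0: "W0 \<subseteq> W" "finite W0" "card W0 = N"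
    using infinite_arbitrarily_large[OF assms(2)] by blast
  have "\<forall>L\<in>W0. \<exists>v. v \<noteq> (0, 0) \<and> L = line v"
    using W0(1) assms(1) unfolding P1_eq_lines by blast
  then obtain u where u: "\<And>L. L \<in> W0 \<Longrightarrow> u L \<noteq> (0, 0) \<and> L = line (u L)"
    by (metis bchoice)
  have "inj_on u W0"
  proof (rule inj_onI)
    fix L L' assume "L \<in> W0" "L' \<in> W0" "u L = u L'"
    then show "L = L'"
      using u by metis
  qed
  moreover have "pairwise noncollinear (u ` W0)"
  proof (rule pairwiseI)
    fix x y assume "x \<in> u ` W0" "y \<in> u ` W0" "x \<noteq> y"
    then obtain L L' where L: "L \<in> W0" "L' \<in> W0" "x = u L" "y = u L'"
      by blast
    then have "line x \<noteq> line y"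
      using u \<open>x \<noteq> y\<close> by metis
    then show "noncollinear x y"
      using line_eq_iff_collinear u L by blast
  qed
  moreover have "P (u L)" if "L \<in> W0" for L
  proof -
    have "u L \<in> L"
      using u[OF that] mem_line_self by metis
    then show ?thesis
      using P W0(1) that by blast
  qed
  ultimately show ?thesis
    unfolding many_noncollinear_def using W0(3) card_image by blast
qed

section \<open>Weak factorization structures\<close>

lemma comp2_0 [simp]: "comp2 p 0 = fst p"
  and comp2_1 [simp]: "comp2 p (Suc 0) = snd p"
  by (simp_all add: comp2_def)

lemma contract_pure_eq_0:
  assumes j: "j < m" and "fst (\<alpha> j) * fst v + snd (\<alpha> j) * snd v = 0"
  shows "contract j v (pure m \<alpha>) = 0"
proof
  fix f :: "nat \<Rightarrow> nat"
  define R where "R = (\<Prod>i\<in>{..<m} - {j}. comp2 (\<alpha> i) (f i))"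
  have prod_split: "(\<Prod>i<m. comp2 (\<alpha> i) ((f(j := k)) i)) = comp2 (\<alpha> j) k * R" for k
  proof -
    have "(\<Prod>i<m. comp2 (\<alpha> i) ((f(j := k)) i)) =
        comp2 (\<alpha> j) k * (\<Prod>i\<in>{..<m} - {j}. comp2 (\<alpha> i) ((f(j := k)) i))"
      using j by (subst prod.remove[of _ j]) auto
    also have "(\<Prod>i\<in>{..<m} - {j}. comp2 (\<alpha> i) ((f(j := k)) i)) = R"
      unfolding R_def by (intro prod.cong) auto
    finally show ?thesis .
  qed
  have "f(j := 0) \<in> idx m \<longleftrightarrow> f(j := Suc 0) \<in> idx m"
    using j unfolding idx_def by auto
  then have "contract j v (pure m \<alpha>) f =
      (if f j = 0 \<and> f(j := 0) \<in> idx m then (fst (\<alpha> j) * fst v + snd (\<alpha> j) * snd v) * R else 0)"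
    using prod_split[of 0] prod_split[of "Suc 0"] by (simp add: contract_def pure_def algebra_simps)
  then show "contract j v (pure m \<alpha>) f = 0 f"
    using assms(2) by simp
qed

lemma Sigma0_subset_kernel:
  assumes "j < m" "v \<in> L"
  shows "Sigma0 m j L \<subseteq> {T. contract j v T = 0}"
  unfolding Sigma0_def
proof (rule tensor.span_minimal)
  interpret contract: Vector_Spaces.linear tscale tscale "contract j v"
    by (rule linear_contract)
  show "tensor.subspace {T. contract j v T = 0}"
    by (rule contract.subspace_kernel)
  show "{pure m \<alpha> |\<alpha>. \<alpha> j \<in> annih L} \<subseteq> {T. contract j v T = 0}"
    using assms contract_pure_eq_0 unfolding annih_def by blast
qed

lemma obtain_independent_subset_card:
  assumes "d \<le> tensor.dim V"
  obtains K where "K \<subseteq> V" "tensor.independent K" "card K = d"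
proof -
  obtain B where B: "B \<subseteq> V" "tensor.independent B" "card B = tensor.dim V"
    by (rule tensor.basis_exists) blast
  then obtain K where "K \<subseteq> B" "card K = d"
    using assms by (metis obtain_subset_with_card_n)
  then show thesis
    using B that tensor.independent_mono by blast
qed

lemma dim_kernel_ge_if_dim_Sigma0:
  assumes "j < m" "v \<in> L" "d \<le> tensor.dim (H \<inter> Sigma0 m j L)"
  shows "dim_kernel_ge H j v d"
proof -
  obtain K where "K \<subseteq> H \<inter> Sigma0 m j L" "tensor.independent K" "card K = d"
    using assms(3) by (rule obtain_independent_subset_card)
  then show ?thesis
    unfolding dim_kernel_ge_def using Sigma0_subset_kernel[OF assms(1,2)] by blast
qed

lemma sum_apply: "(\<Sum>k\<in>A. f k) x = (\<Sum>k\<in>A. f k x)"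
  by (induction A rule: infinite_finite_induct) auto

lemma card_independent_image_hspace_le:
  fixes \<phi> :: "(nat \<Rightarrow> 'a::field) \<Rightarrow> (nat \<Rightarrow> nat) \<Rightarrow> 'a"
  assumes \<phi>: "inj_lin_map m \<phi>" and B: "tensor.independent B" "B \<subseteq> \<phi> ` hspace m"
  shows "card B \<le> m + 1"
proof -
  \<comment> \<open>\<phi> is only linear on hspace m; precomposed with the truncation it becomes linear.\<close>
  define trunc :: "(nat \<Rightarrow> 'a) \<Rightarrow> nat \<Rightarrow> 'a" where "trunc x = (\<lambda>i. if i \<le> m then x i else 0)" for x
  define e :: "nat \<Rightarrow> nat \<Rightarrow> 'a" where "e k = (\<lambda>i. if i = k then 1 else 0)" for k
  have trunc_hspace: "trunc x \<in> hspace m" for x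
    by (simp add: trunc_def hspace_def)
  have trunc_id: "trunc x = x" if "x \<in> hspace m" for x
    using that by (auto simp: trunc_def hspace_def fun_eq_iff)
  have "trunc (x + y) = trunc x + trunc y" "trunc (tscale c x) = tscale c (trunc x)" for x y c
    by (auto simp: trunc_def tscale_def fun_eq_iff)
  then have "Vector_Spaces.linear tscale tscale (\<phi> \<circ> trunc)"
    using \<phi> trunc_hspace unfolding inj_lin_map_def Vector_Spaces.linear_iff
    by (simp add: tensor.vector_space_axioms)
  then interpret \<psi>: Vector_Spaces.linear tscale tscale "\<phi> \<circ> trunc" .
  have "hspace m \<subseteq> tensor.span (e ` {..m})"
  proof
    fix x :: "nat \<Rightarrow> 'a" assume "x \<in> hspace m"
    have "(\<Sum>k\<le>m. tscale (x k) (e k)) i = (\<Sum>k\<le>m. if i = k then x k else 0)" for i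
      unfolding sum_apply by (intro sum.cong) (auto simp: tscale_def e_def)
    then have "x = (\<Sum>k\<le>m. tscale (x k) (e k))"
      using \<open>x \<in> hspace m\<close> by (auto simp: hspace_def fun_eq_iff not_le)
    also have "\<dots> \<in> tensor.span (e ` {..m})"
      by (intro tensor.span_sum tensor.span_scale tensor.span_base) simp
    finally show "x \<in> tensor.span (e ` {..m})" .
  qed
  have "\<phi> ` hspace m = (\<phi> \<circ> trunc) ` hspace m"
    using trunc_id by (intro image_cong) simp_all
  also have "\<dots> \<subseteq> (\<phi> \<circ> trunc) ` tensor.span (e ` {..m})"
    using \<open>hspace m \<subseteq> tensor.span (e ` {..m})\<close> by (rule image_mono)
  also have "\<dots> = tensor.span ((\<phi> \<circ> trunc) ` e ` {..m})"
    by (rule \<psi>.span_image[symmetric])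
  finally have "\<phi> ` hspace m \<subseteq> tensor.span ((\<phi> \<circ> trunc) ` e ` {..m})" .
  then have "card B \<le> card ((\<phi> \<circ> trunc) ` e ` {..m})"
    using tensor.independent_span_bound[OF _ B(1)] B(2) by simp
  also have "\<dots> \<le> card (e ` {..m})"
    by (rule card_image_le) simp
  also have "\<dots> \<le> m + 1"
    using card_image_le[of "{..m}" e] by simp
  finally show ?thesis .
qed

lemma tensors_eq_tensors_on: "tensors m = tensors_on {..<m}"
proof -
  have "idx m = multi_indices {..<m}"
    unfolding idx_def multi_indices_def by (auto simp: not_less)
  then show ?thesis
    unfolding tensors_def tensors_on_def by simp
qed

lemma weak_factorization_structure_degenerate_directions:
  fixes \<phi> :: "(nat \<Rightarrow> 'a::{field, semiring_char_0}) \<Rightarrow> (nat \<Rightarrow> nat) \<Rightarrow> 'a"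
  assumes "weak_factorization_structure m \<phi>" "i < m"
  shows "many_noncollinear N (\<lambda>v. dim_kernel_ge (\<phi> ` hspace m) i v 1)"
proof -
  let ?W = "{L \<in> P1. 1 \<le> tensor.dim (\<phi> ` hspace m \<inter> Sigma0 m i L)}"
  have "generic (\<lambda>L. 1 \<le> tensor.dim (\<phi> ` hspace m \<inter> Sigma0 m i L))"
    using assms unfolding weak_factorization_structure_def by blast
  then have "finite {L \<in> P1. \<not> 1 \<le> tensor.dim (\<phi> ` hspace m \<inter> Sigma0 m i L)}"
    by (simp only: generic_iff_finite)
  then have "infinite (P1 - {L \<in> P1. \<not> 1 \<le> tensor.dim (\<phi> ` hspace m \<inter> Sigma0 m i L)})"
    using infinite_P1 by (rule Diff_infinite_finite)
  moreover have "P1 - {L \<in> P1. \<not> 1 \<le> tensor.dim (\<phi> ` hspace m \<inter> Sigma0 m i L)} = ?W"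
    by blast
  ultimately have "infinite ?W"
    by simp
  then show ?thesis
    using assms(2) by (intro many_noncollinear_if_infinite[of ?W]) (auto intro: dim_kernel_ge_if_dim_Sigma0)
qed

lemma weak_factorization_structure_finite_dim_Sigma0_ge_2:
  fixes \<phi> :: "(nat \<Rightarrow> 'a::{field, semiring_char_0}) \<Rightarrow> (nat \<Rightarrow> nat) \<Rightarrow> 'a"
  assumes \<phi>: "weak_factorization_structure m \<phi>" and "j < m"
  shows "finite {L \<in> P1. 2 \<le> tensor.dim (\<phi> ` hspace m \<inter> Sigma0 m j L)}"
proof (rule ccontr)
  let ?H = "\<phi> ` hspace m" and ?R = "{..<m} - {j}"
  let ?N = "(card ?R + 1)\<^sup>2 + 1"
  assume "infinite {L \<in> P1. 2 \<le> tensor.dim (?H \<inter> Sigma0 m j L)}"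
  then have "many_noncollinear ?N (\<lambda>v. dim_kernel_ge ?H j v 2)"
    using \<open>j < m\<close> by (intro many_noncollinear_if_infinite) (auto intro: dim_kernel_ge_if_dim_Sigma0)
  moreover have "\<forall>i\<in>?R. many_noncollinear ?N (\<lambda>v. dim_kernel_ge ?H i v 1)"
    using weak_factorization_structure_degenerate_directions[OF \<phi>] by blast
  moreover have "?H \<subseteq> tensors_on (insert j ?R)"
    using \<phi> \<open>j < m\<close> by (auto simp: weak_factorization_structure_def inj_lin_map_def
        tensors_eq_tensors_on insert_absorb)
  ultimately obtain B where "B \<subseteq> ?H" "tensor.independent B" "card B = card ?R + 1 + 2"
    using independent_from_kernel_directions[of ?R j ?H 2] by auto
  moreover have "card ?R + 1 + 2 = m + 2"
    using \<open>j < m\<close> by simp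
  ultimately show False
    using card_independent_image_hspace_le[of m \<phi> B] \<phi>
    unfolding weak_factorization_structure_def by simp
qed

theorem theorem2p21:
  fixes m :: nat and \<phi> :: "(nat \<Rightarrow> 'a::real_normed_field) \<Rightarrow> (nat \<Rightarrow> nat) \<Rightarrow> 'a"
  assumes "m \<ge> 2"
    and "weak_factorization_structure m \<phi>"
  shows "factorization_structure m \<phi>"
proof -
  have "generic (\<lambda>L. tensor.dim (\<phi> ` hspace m \<inter> Sigma0 m j L) = 1)" if "j < m" for j
  proof -
    have "generic (\<lambda>L. 1 \<le> tensor.dim (\<phi> ` hspace m \<inter> Sigma0 m j L))"
      using assms(2) that unfolding weak_factorization_structure_def by blast
    then have "finite {L \<in> P1. \<not> 1 \<le> tensor.dim (\<phi> ` hspace m \<inter> Sigma0 m j L)}"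
      by (simp only: generic_iff_finite)
    moreover have "finite {L \<in> P1. 2 \<le> tensor.dim (\<phi> ` hspace m \<inter> Sigma0 m j L)}"
      using assms(2) that by (rule weak_factorization_structure_finite_dim_Sigma0_ge_2)
    ultimately have "finite {L \<in> P1. tensor.dim (\<phi> ` hspace m \<inter> Sigma0 m j L) \<noteq> 1}"
      by (rule finite_subset[rotated, OF finite_UnI]) auto
    then show ?thesis
      by (simp add: generic_iff_finite)
  qed
  then show ?thesis
    using assms(2) unfolding weak_factorization_structure_def factorization_structure_def by blast
qed

end
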